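(* Let $S$ be a left cancellative semigroup and let $\omega$ be a weight on $S$. If $\ell^{1}(S,\omega)$ is pseudo-amenable, then $S$ is a group.
   Context: $S$ is left cancellative if $st=su$ implies $t=u$. A weight on $S$ is a function $\omega:S\to(0,\infty)$ with $\omega(st)\le\omega(s)\omega(t)$. The Beurling algebra $\ell^{1}(S,\omega)$ is the space of $f=\sum_s f(s)\delta_s$ with $\sum_s|f(s)|\omega(s)<\infty$, with convolution $\delta_s*\delta_t=\delta_{st}$. For a Banach algebra $\mathcal{A}$, with $\pi:\mathcal{A}\hat{\otimes}\mathcal{A}\to\mathcal{A}$, $\pi(a\otimes b)=ab$, an approximate diagonal is a net $(m_i)$ in $\mathcal{A}\hat{\otimes}\mathcal{A}$ with $a\cdot m_i-m_i\cdot a\to0$ and $a\pi(m_i)\to a$ for all $a\in\mathcal{A}$ (module actions $c\cdot(a\otimes b)=ca\otimes b$, $(a\otimes b)\cdot c=a\otimes bc$); $\mathcal{A}$ is pseudo-amenable if it has an approximate diagonal. *)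

theory Defs
  imports "HOL-Analysis.Analysis"
begin

definition left_cancellative :: "'a::semigroup_mult itself \<Rightarrow> bool" where
  "left_cancellative _ \<longleftrightarrow> (\<forall>s t u::'a. s * t = s * u \<longrightarrow> t = u)"

definition semigroup_is_group :: "'a::semigroup_mult itself \<Rightarrow> bool" where
  "semigroup_is_group _ \<longleftrightarrow>
     (\<exists>e::'a. (\<forall>x. e * x = x \<and> x * e = x) \<and> (\<forall>x. \<exists>y. x * y = e \<and> y * x = e))"

definition weight :: "('a::semigroup_mult \<Rightarrow> real) \<Rightarrow> bool" where
  "weight \<omega> \<longleftrightarrow> (\<forall>s. 0 < \<omega> s) \<and> (\<forall>s t. \<omega> (s * t) \<le> \<omega> s * \<omega> t)"

definition l1w :: "('a \<Rightarrow> real) \<Rightarrow> ('a \<Rightarrow> complex) set" where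
  "l1w \<omega> = {f. (\<lambda>s. norm (f s) * \<omega> s) summable_on UNIV}"

definition l1w_norm :: "('a \<Rightarrow> real) \<Rightarrow> ('a \<Rightarrow> complex) \<Rightarrow> real" where
  "l1w_norm \<omega> f = (\<Sum>\<^sub>\<infinity>s. norm (f s) * \<omega> s)"

definition conv :: "('a::semigroup_mult \<Rightarrow> complex) \<Rightarrow> ('a \<Rightarrow> complex) \<Rightarrow> 'a \<Rightarrow> complex" where
  "conv f g u = (\<Sum>\<^sub>\<infinity>p\<in>{p. fst p * snd p = u}. f (fst p) * g (snd p))"

text \<open>Projective tensor product l1(S,w) \<otimes> l1(S,w), identified isometrically with
  l1(S x S, w x w); delta_s \<otimes> delta_t corresponds to delta_(s,t).\<close>

definition l1w2 :: "('a \<Rightarrow> real) \<Rightarrow> ('a \<times> 'a \<Rightarrow> complex) set" where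
  "l1w2 \<omega> = {M. (\<lambda>p. norm (M p) * (\<omega> (fst p) * \<omega> (snd p))) summable_on UNIV}"

definition l1w2_norm :: "('a \<Rightarrow> real) \<Rightarrow> ('a \<times> 'a \<Rightarrow> complex) \<Rightarrow> real" where
  "l1w2_norm \<omega> M = (\<Sum>\<^sub>\<infinity>p. norm (M p) * (\<omega> (fst p) * \<omega> (snd p)))"

text \<open>Left module action c.(a \<otimes> b) = ca \<otimes> b.\<close>
definition lmod :: "('a::semigroup_mult \<Rightarrow> complex) \<Rightarrow> ('a \<times> 'a \<Rightarrow> complex) \<Rightarrow> 'a \<times> 'a \<Rightarrow> complex" where
  "lmod c M q = (\<Sum>\<^sub>\<infinity>p\<in>{p. fst p * snd p = fst q}. c (fst p) * M (snd p, snd q))"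

text \<open>Right module action (a \<otimes> b).c = a \<otimes> bc.\<close>
definition rmod :: "('a \<times> 'a \<Rightarrow> complex) \<Rightarrow> ('a::semigroup_mult \<Rightarrow> complex) \<Rightarrow> 'a \<times> 'a \<Rightarrow> complex" where
  "rmod M c q = (\<Sum>\<^sub>\<infinity>p\<in>{p. fst p * snd p = snd q}. M (fst q, fst p) * c (snd p))"

text \<open>Multiplication map pi(a \<otimes> b) = ab.\<close>
definition prodmap :: "('a::semigroup_mult \<times> 'a \<Rightarrow> complex) \<Rightarrow> 'a \<Rightarrow> complex" where
  "prodmap M u = (\<Sum>\<^sub>\<infinity>p\<in>{p. fst p * snd p = u}. M p)"

text \<open>A net (m_i) is represented
  by the (proper) filter it generates on the tensor space; convergence of nets in norm
  is then convergence along this filter.\<close>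

definition pseudo_amenable :: "('a::semigroup_mult \<Rightarrow> real) \<Rightarrow> bool" where
  "pseudo_amenable \<omega> \<longleftrightarrow>
    (\<exists>F :: ('a \<times> 'a \<Rightarrow> complex) filter. F \<noteq> bot \<and>
       eventually (\<lambda>m. m \<in> l1w2 \<omega>) F \<and>
       (\<forall>a \<in> l1w \<omega>.
          ((\<lambda>m. l1w2_norm \<omega> (\<lambda>q. lmod a m q - rmod m a q)) \<longlongrightarrow> 0) F \<and>
          ((\<lambda>m. l1w_norm \<omega> (\<lambda>u. conv a (prodmap m) u - a u)) \<longlongrightarrow> 0) F))"

end

theory Submission
  imports Defs
begin

(* Test an approximate diagonal (m_i) against the point masses delta_s = indicator {s}.
   Since delta_s * pi(m_i) -> delta_s in norm, every coefficient converges: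
   (delta_s * pi(m_i))(u) -> delta_s(u). At u = s this forces s e = s for some e, which
   left cancellation turns into a left identity; then pi(m_i)(e) -> 1, and evaluating at
   u = s e forces s e = s, so e is an identity.
   If s had no right inverse, then in no factorisation x y = e is y of the form w s, so on
   the pairs (s x, y) with x y = e the commutator delta_s.m - m.delta_s agrees with
   delta_s.m, whence |pi(m)(e)| <= ||delta_s.m - m.delta_s|| / omega(s) -> 0, a contradiction.
   In a left cancellative monoid right inverses are two-sided, so S is a group. *)

lemma left_cancellativeD:
  fixes s t u :: "'a::semigroup_mult"
  assumes "left_cancellative TYPE('a)" and "s * t = s * u"
  shows "t = u"
  using assms unfolding left_cancellative_def by blast

lemma left_identity_of_right_unit:
  fixes s e :: "'a::semigroup_mult"
  assumes lc: "left_cancellative TYPE('a)" and "s * e = s"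
  shows "e * x = x"
proof -
  have "s * (e * x) = s * x"
    using \<open>s * e = s\<close> by (simp flip: mult.assoc)
  then show ?thesis by (rule left_cancellativeD[OF lc])
qed

lemma left_inverse_imp_right_inverse:
  fixes e s y :: "'a::semigroup_mult"
  assumes lc: "left_cancellative TYPE('a)"
    and left_id: "\<And>x. e * x = x" and right_id: "\<And>x. x * e = x" and "y * s = e"
  shows "s * y = e"
proof -
  have "(s * y) * (s * y) = s * ((y * s) * y)" by (simp add: mult.assoc)
  also have "\<dots> = (s * y) * e" using \<open>y * s = e\<close> by (simp add: left_id right_id)
  finally show ?thesis by (rule left_cancellativeD[OF lc])
qed

lemma semigroup_is_groupI:
  fixes e :: "'a::semigroup_mult"
  assumes lc: "left_cancellative TYPE('a)"
    and left_id: "\<And>x. e * x = x" and right_id: "\<And>x. x * e = x"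
    and right_inverse: "\<And>x. \<exists>y. x * y = e"
  shows "semigroup_is_group TYPE('a)"
  unfolding semigroup_is_group_def
proof (rule exI[of _ e], intro conjI allI)
  fix x
  obtain y where "x * y = e" using right_inverse by blast
  moreover from this have "y * x = e"
    by (rule left_inverse_imp_right_inverse[OF lc left_id right_id])
  ultimately show "\<exists>y. x * y = e \<and> y * x = e" by blast
qed (simp_all add: left_id right_id)

lemma norm_infsum_le_weighted_sum:
  fixes D :: "'b \<Rightarrow> 'z::banach"
  assumes summable: "(\<lambda>x. norm (D x) * W x) summable_on B"
    and c_pos: "0 < c" and c_le: "\<And>x. x \<in> B \<Longrightarrow> c \<le> W x"
  shows "norm (infsum D B) \<le> (\<Sum>\<^sub>\<infinity>x\<in>B. norm (D x) * W x) / c"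
proof -
  have le: "norm (D x) \<le> norm (D x) * W x / c" if "x \<in> B" for x
    using c_pos c_le[OF that] by (simp add: field_simps mult_right_mono)
  have summable': "(\<lambda>x. norm (D x) * W x / c) summable_on B"
    using summable_on_cmult_left[OF summable, of "1 / c"] by simp
  have abs: "(\<lambda>x. norm (D x)) summable_on B"
    by (rule Infinite_Sum.abs_summable_on_comparison_test'[OF summable' le])
  have "norm (infsum D B) \<le> (\<Sum>\<^sub>\<infinity>x\<in>B. norm (D x))"
    by (rule norm_infsum_bound[OF abs])
  also have "\<dots> \<le> (\<Sum>\<^sub>\<infinity>x\<in>B. norm (D x) * W x / c)"
    by (rule infsum_mono[OF abs summable' le])
  also have "\<dots> = (\<Sum>\<^sub>\<infinity>x\<in>B. norm (D x) * W x) / c"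
    using infsum_cmult_left'[of "\<lambda>x. norm (D x) * W x" "1 / c" B] by simp
  finally show ?thesis .
qed

lemma norm_infsum_le_weighted_norm:
  fixes D :: "'b \<Rightarrow> 'z::banach"
  assumes summable: "(\<lambda>x. norm (D x) * W x) summable_on UNIV"
    and W_nonneg: "\<And>x. 0 \<le> W x" and c_pos: "0 < c" and c_le: "\<And>x. x \<in> B \<Longrightarrow> c \<le> W x"
  shows "norm (infsum D B) \<le> (\<Sum>\<^sub>\<infinity>x. norm (D x) * W x) / c"
proof -
  have summable_B: "(\<lambda>x. norm (D x) * W x) summable_on B"
    using summable_on_subset_banach[OF summable] by blast
  have "norm (infsum D B) \<le> (\<Sum>\<^sub>\<infinity>x\<in>B. norm (D x) * W x) / c"
    by (rule norm_infsum_le_weighted_sum[OF summable_B c_pos c_le])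
  also have "\<dots> \<le> (\<Sum>\<^sub>\<infinity>x. norm (D x) * W x) / c"
    by (intro divide_right_mono infsum_mono_neutral[OF summable_B summable])
      (use W_nonneg c_pos in auto)
  finally show ?thesis .
qed

lemma summable_on_weighted_fibre_sums:
  fixes F :: "'b \<Rightarrow> 'z::banach" and g :: "'b \<Rightarrow> 'c"
  assumes summable: "(\<lambda>p. norm (F p) * W p) summable_on UNIV"
    and V_pos: "\<And>c. 0 < V c" and C_pos: "0 < C" and V_le: "\<And>p. V (g p) \<le> C * W p"
  shows "(\<lambda>c. norm (\<Sum>\<^sub>\<infinity>p\<in>{p. g p = c}. F p) * V c) summable_on UNIV"
proof -
  define H where "H p = norm (F p) * W p" for p
  have "(\<lambda>(c, p). H p) summable_on Sigma UNIV (\<lambda>c. {p. g p = c})"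
  proof -
    have "Sigma UNIV (\<lambda>c. {p. g p = c}) = (\<lambda>p. (g p, p)) ` UNIV" by auto
    moreover have "inj (\<lambda>p. (g p, p))" by (auto intro: injI)
    ultimately show ?thesis
      using summable by (simp add: summable_on_reindex o_def H_def)
  qed
  then have fibres: "(\<lambda>c. C * (\<Sum>\<^sub>\<infinity>p\<in>{p. g p = c}. H p)) summable_on UNIV"
    by (intro summable_on_cmult_right summable_on_Sigma_banach)
  show ?thesis
  proof (rule summable_on_comparison_test[OF fibres])
    fix c
    have W_ge: "V c / C \<le> W p" if "p \<in> {p. g p = c}" for p
      using V_le[of p] that C_pos by (simp add: field_simps)
    have "H summable_on {p. g p = c}"
      using summable summable_on_subset_banach unfolding H_def by blast
    then have "norm (\<Sum>\<^sub>\<infinity>p\<in>{p. g p = c}. F p) \<le> (\<Sum>\<^sub>\<infinity>p\<in>{p. g p = c}. H p) / (V c / C)"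
      unfolding H_def using V_pos C_pos W_ge by (intro norm_infsum_le_weighted_sum) auto
    then show "norm (\<Sum>\<^sub>\<infinity>p\<in>{p. g p = c}. F p) * V c \<le> C * (\<Sum>\<^sub>\<infinity>p\<in>{p. g p = c}. H p)"
      using V_pos[of c] C_pos by (simp add: field_simps)
  qed (use V_pos in \<open>simp add: less_imp_le\<close>)
qed

lemma summable_on_weighted_diff:
  fixes f g :: "'b \<Rightarrow> 'z::real_normed_vector"
  assumes "(\<lambda>x. norm (f x) * W x) summable_on A" "(\<lambda>x. norm (g x) * W x) summable_on A"
    and "\<And>x. 0 \<le> W x"
  shows "(\<lambda>x. norm (f x - g x) * W x) summable_on A"
proof (rule summable_on_comparison_test[OF summable_on_add[OF assms(1,2)]])
  fix x
  show "norm (f x - g x) * W x \<le> norm (f x) * W x + norm (g x) * W x"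
    using mult_right_mono[OF norm_triangle_ineq4 assms(3)] by (simp add: distrib_right)
qed (use assms(3) in simp)

lemma infsum_indicator_fst:
  fixes G :: "'a \<times> 'b \<Rightarrow> complex"
  shows "(\<Sum>\<^sub>\<infinity>p\<in>A. indicator {s} (fst p) * G p) = (\<Sum>\<^sub>\<infinity>z\<in>{z. (s, z) \<in> A}. G (s, z))"
proof -
  have "(\<Sum>\<^sub>\<infinity>p\<in>A. indicator {s} (fst p) * G p) = infsum G (Pair s ` {z. (s, z) \<in> A})"
    by (rule infsum_cong_neutral) (auto simp: indicator_def)
  also have "\<dots> = (\<Sum>\<^sub>\<infinity>z\<in>{z. (s, z) \<in> A}. G (s, z))"
    by (simp add: infsum_reindex inj_on_def o_def)
  finally show ?thesis .
qed

lemma infsum_indicator_snd: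
  fixes G :: "'a \<times> 'b \<Rightarrow> complex"
  shows "(\<Sum>\<^sub>\<infinity>p\<in>A. G p * indicator {s} (snd p)) = (\<Sum>\<^sub>\<infinity>z\<in>{z. (z, s) \<in> A}. G (z, s))"
proof -
  have "(\<Sum>\<^sub>\<infinity>p\<in>A. G p * indicator {s} (snd p)) = infsum G ((\<lambda>z. (z, s)) ` {z. (z, s) \<in> A})"
    by (rule infsum_cong_neutral) (auto simp: indicator_def)
  also have "\<dots> = (\<Sum>\<^sub>\<infinity>z\<in>{z. (z, s) \<in> A}. G (z, s))"
    by (simp add: infsum_reindex inj_on_def o_def)
  finally show ?thesis .
qed

lemma conv_indicator_left: "conv (indicator {s}) g u = (\<Sum>\<^sub>\<infinity>v\<in>{v. s * v = u}. g v)"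
  unfolding conv_def by (simp add: infsum_indicator_fst)

lemma lmod_indicator: "lmod (indicator {s}) M q = (\<Sum>\<^sub>\<infinity>p\<in>{p. (s * fst p, snd p) = q}. M p)"
proof -
  have "lmod (indicator {s}) M q = (\<Sum>\<^sub>\<infinity>z\<in>{z. s * z = fst q}. M (z, snd q))"
    unfolding lmod_def by (simp add: infsum_indicator_fst)
  also have "\<dots> = infsum M ((\<lambda>z. (z, snd q)) ` {z. s * z = fst q})"
    by (simp add: infsum_reindex inj_on_def o_def)
  also have "(\<lambda>z. (z, snd q)) ` {z. s * z = fst q} = {p. (s * fst p, snd p) = q}"
    by (cases q) force
  finally show ?thesis .
qed

lemma rmod_indicator: "rmod M (indicator {s}) q = (\<Sum>\<^sub>\<infinity>p\<in>{p. (fst p, snd p * s) = q}. M p)"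
proof -
  have "rmod M (indicator {s}) q = (\<Sum>\<^sub>\<infinity>z\<in>{z. z * s = snd q}. M (fst q, z))"
    unfolding rmod_def by (simp add: infsum_indicator_snd)
  also have "\<dots> = infsum M ((\<lambda>z. (fst q, z)) ` {z. z * s = snd q})"
    by (simp add: infsum_reindex inj_on_def o_def)
  also have "(\<lambda>z. (fst q, z)) ` {z. z * s = snd q} = {p. (fst p, snd p * s) = q}"
    by (cases q) force
  finally show ?thesis .
qed

lemma weight_pos: "weight \<omega> \<Longrightarrow> 0 < \<omega> s"
  unfolding weight_def by blast

lemma weight_mult: "weight \<omega> \<Longrightarrow> \<omega> (s * t) \<le> \<omega> s * \<omega> t"
  unfolding weight_def by blast

lemma indicator_in_l1w: "indicator {s} \<in> l1w \<omega>"
proof -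
  have "(\<lambda>u. norm (indicator {s} u :: complex) * \<omega> u) summable_on {s}" by simp
  then have "(\<lambda>u. norm (indicator {s} u :: complex) * \<omega> u) summable_on UNIV"
    by (rule summable_on_cong_neutral[THEN iffD1, rotated -1]) auto
  then show ?thesis unfolding l1w_def by simp
qed

lemma conv_indicator_prodmap_diff_summable:
  assumes w: "weight \<omega>" and m: "m \<in> l1w2 \<omega>"
  shows "(\<lambda>u. norm (conv (indicator {s}) (prodmap m) u - indicator {s} u) * \<omega> u) summable_on UNIV"
proof (rule summable_on_weighted_diff)
  have prodmap: "(\<lambda>u. norm (prodmap m u) * \<omega> u) summable_on UNIV"
    unfolding prodmap_def
    by (rule summable_on_weighted_fibre_sums[where W = "\<lambda>p. \<omega> (fst p) * \<omega> (snd p)" and C = 1])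
      (use m weight_pos[OF w] weight_mult[OF w] in \<open>auto simp: l1w2_def\<close>)
  show "(\<lambda>u. norm (conv (indicator {s}) (prodmap m) u) * \<omega> u) summable_on UNIV"
    unfolding conv_indicator_left
    by (rule summable_on_weighted_fibre_sums[OF prodmap, where C = "\<omega> s"])
      (use weight_pos[OF w] weight_mult[OF w] in \<open>auto simp: mult.commute[of _ "\<omega> s"]\<close>)
  show "(\<lambda>u. norm (indicator {s} u :: complex) * \<omega> u) summable_on UNIV"
    using indicator_in_l1w by (simp add: l1w_def)
qed (use weight_pos[OF w] in \<open>simp add: less_imp_le\<close>)

lemma commutator_indicator_summable:
  assumes w: "weight \<omega>" and m: "m \<in> l1w2 \<omega>"
  shows "(\<lambda>q. norm (lmod (indicator {s}) m q - rmod m (indicator {s}) q) * (\<omega> (fst q) * \<omega> (snd q)))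
           summable_on UNIV"
proof (rule summable_on_weighted_diff)
  have m_summable: "(\<lambda>p. norm (m p) * (\<omega> (fst p) * \<omega> (snd p))) summable_on UNIV"
    using m by (simp add: l1w2_def)
  have pos: "0 < \<omega> x" for x by (rule weight_pos[OF w])
  show "(\<lambda>q. norm (lmod (indicator {s}) m q) * (\<omega> (fst q) * \<omega> (snd q))) summable_on UNIV"
    unfolding lmod_indicator
    by (rule summable_on_weighted_fibre_sums[OF m_summable, where C = "\<omega> s"])
      (use pos weight_mult[OF w] in \<open>auto simp: mult.assoc intro: mult_right_mono less_imp_le\<close>)
  show "(\<lambda>q. norm (rmod m (indicator {s}) q) * (\<omega> (fst q) * \<omega> (snd q))) summable_on UNIV"
    unfolding rmod_indicator
    by (rule summable_on_weighted_fibre_sums[OF m_summable, where C = "\<omega> s"])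
      (use pos weight_mult[OF w] in \<open>auto simp: ac_simps intro: mult_left_mono less_imp_le\<close>)
qed (use weight_pos[OF w] in \<open>simp add: less_imp_le\<close>)

lemma norm_prodmap_identity_le_commutator:
  fixes \<omega> :: "'a::semigroup_mult \<Rightarrow> real" and e s :: 'a
  assumes lc: "left_cancellative TYPE('a)" and w: "weight \<omega>"
    and left_id: "\<And>x. e * x = x" and right_id: "\<And>x. x * e = x"
    and no_right_inverse: "\<nexists>t. s * t = e" and m: "m \<in> l1w2 \<omega>"
  shows "norm (prodmap m e) \<le> l1w2_norm \<omega> (\<lambda>q. lmod (indicator {s}) m q - rmod m (indicator {s}) q) / \<omega> s"
proof -
  define D where "D = (\<lambda>q. lmod (indicator {s}) m q - rmod m (indicator {s}) q)"
  define E where "E = {p :: 'a \<times> 'a. fst p * snd p = e}"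
  define \<phi> where "\<phi> p = (s * fst p, snd p)" for p :: "'a \<times> 'a"
  have inj: "inj \<phi>"
    by (rule injI) (auto simp: \<phi>_def prod_eq_iff dest: left_cancellativeD[OF lc])
  have lmod_\<phi>: "lmod (indicator {s}) m (\<phi> p) = m p" for p
  proof -
    have "{p'. (s * fst p', snd p') = \<phi> p} = {p}"
      using inj by (auto simp: \<phi>_def[symmetric] inj_eq)
    then show ?thesis by (simp add: lmod_indicator)
  qed
  have rmod_\<phi>: "rmod m (indicator {s}) (\<phi> p) = 0" if "p \<in> E" for p
  proof -
    have "z * s \<noteq> snd p" for z
    proof
      assume "z * s = snd p"
      then have "(fst p * z) * s = e" using that by (simp add: E_def mult.assoc flip: \<open>z * s = snd p\<close>)
      then have "s * (fst p * z) = e"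
        by (rule left_inverse_imp_right_inverse[OF lc left_id right_id])
      with no_right_inverse show False by blast
    qed
    then have "{p'. (fst p', snd p' * s) = \<phi> p} = {}" by (auto simp: \<phi>_def prod_eq_iff)
    then show ?thesis by (simp add: rmod_indicator)
  qed
  have D_summable: "(\<lambda>q. norm (D q) * (\<omega> (fst q) * \<omega> (snd q))) summable_on UNIV"
    unfolding D_def by (rule commutator_indicator_summable[OF w m])
  have weight_ge: "\<omega> s \<le> \<omega> (fst q) * \<omega> (snd q)" if "q \<in> \<phi> ` E" for q
  proof -
    from that obtain p where "p \<in> E" "q = \<phi> p" by blast
    then have "fst q * snd q = s" by (simp add: E_def \<phi>_def mult.assoc right_id)
    then show ?thesis using weight_mult[OF w, of "fst q" "snd q"] by simp
  qed
  have "prodmap m e = infsum m E" by (simp add: prodmap_def E_def)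
  also have "\<dots> = infsum (lmod (indicator {s}) m \<circ> \<phi>) E" by (simp add: o_def lmod_\<phi>)
  also have "\<dots> = infsum (lmod (indicator {s}) m) (\<phi> ` E)"
    by (rule infsum_reindex[OF inj_on_subset[OF inj], symmetric]) simp
  also have "\<dots> = infsum D (\<phi> ` E)"
    by (rule infsum_cong) (auto simp: D_def rmod_\<phi>)
  finally have "norm (prodmap m e) = norm (infsum D (\<phi> ` E))" by simp
  also have "\<dots> \<le> l1w2_norm \<omega> D / \<omega> s"
    unfolding l1w2_norm_def
    by (rule norm_infsum_le_weighted_norm[OF D_summable])
      (use weight_pos[OF w] weight_ge in \<open>auto intro: less_imp_le\<close>)
  finally show ?thesis by (simp add: D_def)
qed

locale approximate_diagonal =
  fixes \<omega> :: "'a::semigroup_mult \<Rightarrow> real" and F :: "('a \<times> 'a \<Rightarrow> complex) filter"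
  assumes weight: "weight \<omega>"
    and nontrivial: "F \<noteq> bot"
    and eventually_l1w2: "\<forall>\<^sub>F m in F. m \<in> l1w2 \<omega>"
    and commutator_tendsto: "a \<in> l1w \<omega> \<Longrightarrow> ((\<lambda>m. l1w2_norm \<omega> (\<lambda>q. lmod a m q - rmod m a q)) \<longlongrightarrow> 0) F"
    and approximate_unit: "a \<in> l1w \<omega> \<Longrightarrow> ((\<lambda>m. l1w_norm \<omega> (\<lambda>u. conv a (prodmap m) u - a u)) \<longlongrightarrow> 0) F"

lemma pseudo_amenableE:
  assumes "pseudo_amenable \<omega>" and "weight \<omega>"
  obtains F where "approximate_diagonal \<omega> F"
  using assms unfolding pseudo_amenable_def approximate_diagonal_def by blast

context approximate_diagonal
begin

lemma conv_indicator_prodmap_tendsto: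
  fixes s u :: 'a
  shows "((\<lambda>m. conv (indicator {s}) (prodmap m) u) \<longlongrightarrow> indicator {s} u) F"
proof -
  have "((\<lambda>m. conv (indicator {s}) (prodmap m) u - indicator {s} u) \<longlongrightarrow> 0) F"
  proof (rule Lim_null_comparison)
    show "((\<lambda>m. l1w_norm \<omega> (\<lambda>u. conv (indicator {s}) (prodmap m) u - indicator {s} u) / \<omega> u) \<longlongrightarrow> 0) F"
      using tendsto_divide_zero[OF approximate_unit[OF indicator_in_l1w]] by simp
    show "\<forall>\<^sub>F m in F. norm (conv (indicator {s}) (prodmap m) u - indicator {s} u)
            \<le> l1w_norm \<omega> (\<lambda>u. conv (indicator {s}) (prodmap m) u - indicator {s} u) / \<omega> u"
      using eventually_l1w2
    proof eventually_elim
      case (elim m)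
      have "norm (\<Sum>\<^sub>\<infinity>v\<in>{u}. conv (indicator {s}) (prodmap m) v - indicator {s} v)
            \<le> l1w_norm \<omega> (\<lambda>u. conv (indicator {s}) (prodmap m) u - indicator {s} u) / \<omega> u"
        unfolding l1w_norm_def
        by (rule norm_infsum_le_weighted_norm[OF conv_indicator_prodmap_diff_summable[OF weight elim]])
          (use weight_pos[OF weight] in \<open>auto intro: less_imp_le\<close>)
      then show ?case by simp
    qed
  qed
  then show ?thesis by (simp add: LIM_zero_iff)
qed

lemma right_unit_exists:
  fixes s :: 'a
  shows "\<exists>e. s * e = s"
proof (rule ccontr)
  assume "\<nexists>e. s * e = s"
  then have "conv (indicator {s}) (prodmap m) s = 0" for m
    by (simp add: conv_indicator_left)
  then have "((\<lambda>m. 0) \<longlongrightarrow> (1::complex)) F"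
    using conv_indicator_prodmap_tendsto[of s s] by simp
  then show False using tendsto_unique[OF nontrivial tendsto_const] by fastforce
qed

lemma prodmap_left_identity_tendsto:
  fixes e :: 'a
  assumes left_id: "\<And>x. e * x = x"
  shows "((\<lambda>m. prodmap m e) \<longlongrightarrow> 1) F"
proof -
  have "{v. e * v = e} = {e}" by (simp add: left_id)
  then show ?thesis
    using conv_indicator_prodmap_tendsto[of e e] by (simp add: conv_indicator_left)
qed

lemma left_identity_is_right_identity:
  fixes e s :: 'a
  assumes lc: "left_cancellative TYPE('a)" and left_id: "\<And>x. e * x = x"
  shows "s * e = s"
proof (rule ccontr)
  assume "s * e \<noteq> s"
  have "{v. s * v = s * e} = {e}" using left_cancellativeD[OF lc] by blast
  then have "((\<lambda>m. prodmap m e) \<longlongrightarrow> 0) F"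
    using conv_indicator_prodmap_tendsto[of s "s * e"] \<open>s * e \<noteq> s\<close>
    by (simp add: conv_indicator_left)
  with prodmap_left_identity_tendsto[OF left_id] show False
    using tendsto_unique[OF nontrivial] by fastforce
qed

lemma right_inverse_exists:
  fixes e s :: 'a
  assumes lc: "left_cancellative TYPE('a)"
    and left_id: "\<And>x. e * x = x" and right_id: "\<And>x. x * e = x"
  shows "\<exists>t. s * t = e"
proof (rule ccontr)
  assume no_right_inverse: "\<nexists>t. s * t = e"
  have "((\<lambda>m. prodmap m e) \<longlongrightarrow> 0) F"
  proof (rule Lim_null_comparison)
    show "((\<lambda>m. l1w2_norm \<omega> (\<lambda>q. lmod (indicator {s}) m q - rmod m (indicator {s}) q) / \<omega> s) \<longlongrightarrow> 0) F"
      using tendsto_divide_zero[OF commutator_tendsto[OF indicator_in_l1w]] by simp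
    show "\<forall>\<^sub>F m in F. norm (prodmap m e)
            \<le> l1w2_norm \<omega> (\<lambda>q. lmod (indicator {s}) m q - rmod m (indicator {s}) q) / \<omega> s"
      using eventually_l1w2 by eventually_elim
        (rule norm_prodmap_identity_le_commutator[OF lc weight left_id right_id no_right_inverse])
  qed
  with prodmap_left_identity_tendsto[OF left_id] show False
    using tendsto_unique[OF nontrivial] by fastforce
qed

end

theorem theorem2p10:
  fixes \<omega> :: "'a::semigroup_mult \<Rightarrow> real"
  assumes "left_cancellative TYPE('a)"
    and "weight \<omega>"
    and "pseudo_amenable \<omega>"
  shows "semigroup_is_group TYPE('a)"
proof -
  obtain F where "approximate_diagonal \<omega> F"
    using pseudo_amenableE[OF assms(3,2)] .
  then interpret approximate_diagonal \<omega> F .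
  obtain e :: 'a where "undefined * e = undefined"
    using right_unit_exists by blast
  then have left_id: "e * x = x" for x
    by (rule left_identity_of_right_unit[OF assms(1)])
  have right_id: "x * e = x" for x
    by (rule left_identity_is_right_identity[OF assms(1) left_id])
  show ?thesis
    by (rule semigroup_is_groupI[OF assms(1) left_id right_id right_inverse_exists[OF assms(1) left_id right_id]])
qed

end
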